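(* For every integer $r\geq 2$, $$\sum_{M\geq1}g_r(M)z^M=\frac{z}{1-2z}\cdot\frac{(1-z)^{r-1}-z^{r-1}}{(1-z)^{r-1}-z^r}.$$
   Context: The perimeter of a nonempty partition $\lambda$ with largest part $\lambda_1$ and $\ell(\lambda)$ parts is $\lambda_1+\ell(\lambda)-1$. For $r\geq2$, $g_r(M)$ is the number of partitions with perimeter $M$ none of whose parts is divisible by $r$. *)

theory Defs
  imports "HOL-Computational_Algebra.Formal_Power_Series"
begin

definition is_partition :: "nat list \<Rightarrow> bool" where
  "is_partition xs \<longleftrightarrow> xs \<noteq> [] \<and> sorted_wrt (\<ge>) xs \<and> (\<forall>x\<in>set xs. 0 < x)"

definition perimeter :: "nat list \<Rightarrow> nat" where
  "perimeter xs = Max (set xs) + length xs - 1"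

definition g :: "nat \<Rightarrow> nat \<Rightarrow> nat" where
  "g r M = card {xs. is_partition xs \<and> (\<forall>x\<in>set xs. \<not> r dvd x) \<and> perimeter xs = M}"

end

theory Submission
  imports Defs "HOL-Library.Multiset"
begin

text \<open>A partition with largest part \<open>a\<close> and perimeter \<open>M\<close> is \<open>a\<close> followed by a weakly
  decreasing sequence of \<open>M - a\<close> parts taken from the \<open>c a\<close> non-multiples of \<open>r\<close> in
  \<open>[1, a]\<close>, i.e. by a multiset of that size. Hence the generating function is the sum of
  \<open>X^a / (1 - X)^(c a)\<close> over all \<open>a\<close> not divisible by \<open>r\<close>. Since
  \<open>c a = (a div r) (r - 1) + a mod r\<close>, the term for \<open>a\<close> is \<open>u^(a div r) w^(a mod r)\<close> with
  \<open>u = X^r / (1 - X)^(r - 1)\<close> and \<open>w = X / (1 - X)\<close>, so the series equals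
  \<open>(w + \<dots> + w^(r - 1)) / (1 - u)\<close>, which simplifies to the claimed rational function.\<close>

definition desc_lists :: "'a::linorder set \<Rightarrow> nat \<Rightarrow> 'a list set" where
  "desc_lists A n = {ys. length ys = n \<and> set ys \<subseteq> A \<and> sorted_wrt (\<ge>) ys}"

lemma finite_desc_lists:
  assumes "finite A"
  shows "finite (desc_lists A n)"
proof (rule finite_subset)
  show "desc_lists A n \<subseteq> {xs. set xs \<subseteq> A \<and> length xs = n}"
    by (auto simp: desc_lists_def)
  show "finite {xs. set xs \<subseteq> A \<and> length xs = n}"
    using assms by (rule finite_lists_length_eq)
qed

lemma bij_betw_mset_desc_lists: "bij_betw mset (desc_lists A n) (multisets_of_size A n)"
proof (rule bij_betw_imageI)
  show "inj_on mset (desc_lists A n)"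
  proof (rule inj_onI)
    fix xs ys assume "xs \<in> desc_lists A n" "ys \<in> desc_lists A n" "mset xs = mset ys"
    then have "sort (rev xs) = rev ys" "sort (rev xs) = rev xs"
      by (auto simp: desc_lists_def sorted_wrt_rev intro: properties_for_sort sorted_sort_id)
    then show "xs = ys" by simp
  qed
  have "N \<in> mset ` desc_lists A n" if "N \<in> multisets_of_size A n" for N
  proof
    show "N = mset (rev (sorted_list_of_multiset N))" by simp
    show "rev (sorted_list_of_multiset N) \<in> desc_lists A n"
      using that by (auto simp: desc_lists_def multisets_of_size_def sorted_wrt_rev
          simp flip: size_mset)
  qed
  then show "mset ` desc_lists A n = multisets_of_size A n"
    by (auto simp: desc_lists_def multisets_of_size_def)
qed

lemma card_desc_lists:
  assumes "finite A"
  shows "card (desc_lists A n) = (card A + n - 1) choose n"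
  using bij_betw_same_card[OF bij_betw_mset_desc_lists] card_multisets_of_size[OF assms]
  by metis

definition non_multiples :: "nat \<Rightarrow> nat \<Rightarrow> nat set" where
  "non_multiples r a = {x \<in> {1..a}. \<not> r dvd x}"

lemma finite_non_multiples: "finite (non_multiples r a)"
  by (simp add: non_multiples_def)

lemma non_multiples_Suc:
  "non_multiples r (Suc a) =
     (if r dvd Suc a then non_multiples r a else insert (Suc a) (non_multiples r a))"
  by (auto simp: non_multiples_def le_Suc_eq)

lemma card_multiples_upto:
  assumes "r > 0"
  shows "card {x \<in> {1..a}. r dvd x} = a div r"
proof -
  have "{x \<in> {1..a}. r dvd x} = (\<lambda>k. r * k) ` {1..a div r}"
  proof (intro equalityI subsetI)
    fix x assume "x \<in> {x \<in> {1..a}. r dvd x}"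
    then obtain k where "x = r * k" "1 \<le> r * k" "r * k \<le> a" by auto
    moreover from this assms have "k \<in> {1..a div r}"
      by (auto simp: less_eq_div_iff_mult_less_eq mult.commute intro: Nat.gr0I)
    ultimately show "x \<in> (\<lambda>k. r * k) ` {1..a div r}" by blast
  next
    fix x assume "x \<in> (\<lambda>k. r * k) ` {1..a div r}"
    then show "x \<in> {x \<in> {1..a}. r dvd x}"
      using assms by (auto simp: less_eq_div_iff_mult_less_eq mult.commute)
  qed
  also have "card \<dots> = a div r"
    using assms by (simp add: card_image inj_on_def)
  finally show ?thesis .
qed

lemma card_non_multiples:
  assumes "r > 0"
  shows "card (non_multiples r a) = a div r * (r - 1) + a mod r"
proof -
  have "card (non_multiples r a) = card ({1..a} - {x \<in> {1..a}. r dvd x})"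
    by (auto simp: non_multiples_def intro: arg_cong[where f = card])
  also have "\<dots> = a - a div r"
    using card_multiples_upto[OF assms] by (subst card_Diff_subset) auto
  also have "a - a div r = a div r * (r - 1) + a mod r"
  proof -
    have "r = Suc (r - 1)" using assms by simp
    then have "a div r * r = a div r * (r - 1) + a div r" by (metis mult_Suc_right add.commute)
    then have "a = a div r * (r - 1) + a div r + a mod r" by (metis div_mult_mod_eq)
    then show ?thesis by linarith
  qed
  finally show ?thesis .
qed

lemma avoiding_partitions_perimeter_eq:
  "{xs. is_partition xs \<and> (\<forall>x\<in>set xs. \<not> r dvd x) \<and> perimeter xs = M}
   = (\<Union>a\<in>non_multiples r M. (#) a ` desc_lists (non_multiples r a) (M - a))"
proof (intro equalityI subsetI)
  fix xs assume "xs \<in> {xs. is_partition xs \<and> (\<forall>x\<in>set xs. \<not> r dvd x) \<and> perimeter xs = M}"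
  then have p: "is_partition xs" and nd: "\<forall>x\<in>set xs. \<not> r dvd x" and pm: "perimeter xs = M"
    by auto
  from p obtain a ys where xs: "xs = a # ys"
    unfolding is_partition_def by (cases xs) auto
  have ys: "\<forall>y\<in>set ys. 0 < y \<and> y \<le> a" "sorted_wrt (\<ge>) ys" and "0 < a"
    using p unfolding is_partition_def xs by auto
  have "Max (set xs) = a"
    using ys(1) unfolding xs by (auto intro: Max_eqI)
  then have "M = a + length ys"
    using pm unfolding perimeter_def xs by simp
  then have "ys \<in> desc_lists (non_multiples r a) (M - a)" "a \<in> non_multiples r M"
    using ys nd \<open>0 < a\<close> unfolding xs desc_lists_def non_multiples_def by auto
  then show "xs \<in> (\<Union>a\<in>non_multiples r M. (#) a ` desc_lists (non_multiples r a) (M - a))"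
    unfolding xs by blast
next
  fix xs assume "xs \<in> (\<Union>a\<in>non_multiples r M. (#) a ` desc_lists (non_multiples r a) (M - a))"
  then obtain a ys where a: "a \<in> non_multiples r M"
    and ys: "ys \<in> desc_lists (non_multiples r a) (M - a)" and xs: "xs = a # ys"
    by blast
  have ys': "\<forall>y\<in>set ys. 0 < y \<and> y \<le> a \<and> \<not> r dvd y" "sorted_wrt (\<ge>) ys" "length ys = M - a"
    using ys unfolding desc_lists_def non_multiples_def by auto
  have "Max (set xs) = a"
    using ys'(1) unfolding xs by (auto intro: Max_eqI)
  then show "xs \<in> {xs. is_partition xs \<and> (\<forall>x\<in>set xs. \<not> r dvd x) \<and> perimeter xs = M}"
    using ys' a unfolding is_partition_def perimeter_def xs non_multiples_def by auto
qed

lemma g_eq_sum_choose: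
  "g r M = (\<Sum>a\<in>non_multiples r M. (card (non_multiples r a) + (M - a) - 1) choose (M - a))"
proof -
  have "g r M = card (\<Union>a\<in>non_multiples r M. (#) a ` desc_lists (non_multiples r a) (M - a))"
    unfolding g_def avoiding_partitions_perimeter_eq ..
  also have "\<dots> = (\<Sum>a\<in>non_multiples r M. card ((#) a ` desc_lists (non_multiples r a) (M - a)))"
    by (rule card_UN_disjoint) (auto intro: finite_desc_lists finite_non_multiples)
  also have "\<dots> = (\<Sum>a\<in>non_multiples r M. card (desc_lists (non_multiples r a) (M - a)))"
    by (rule sum.cong) (auto intro!: card_image inj_onI)
  also have "\<dots> = (\<Sum>a\<in>non_multiples r M. (card (non_multiples r a) + (M - a) - 1) choose (M - a))"
    by (simp add: card_desc_lists finite_non_multiples)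
  finally show ?thesis .
qed

lemma fps_nth_inverse_one_minus_X_power:
  "fps_nth (inverse (1 - fps_X :: 'a::field fps) ^ k) n = of_nat ((k + n - 1) choose n)"
proof (cases k)
  case 0
  then show ?thesis by (cases n) (auto simp: binomial_eq_0)
next
  case (Suc m)
  have "fps_nth (inverse (1 - fps_X :: 'a fps) ^ Suc m) n = of_nat ((m + n) choose n)" for n
  proof (induction m arbitrary: n)
    case 0
    then show ?case by (simp add: fps_inverse_one_minus_fps_X)
  next
    case (Suc m)
    have "fps_nth (inverse (1 - fps_X :: 'a fps) ^ Suc (Suc m)) n
        = (\<Sum>i=0..n. fps_nth (inverse (1 - fps_X :: 'a fps) ^ Suc m) i)"
      by (simp only: power_Suc2 fps_mult_nth fps_inverse_one_minus_fps_X) simp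
    also have "\<dots> = of_nat (\<Sum>i\<le>n. (m + i) choose i)"
      unfolding Suc.IH atLeast0AtMost of_nat_sum ..
    also have "\<dots> = of_nat ((Suc m + n) choose n)"
      by (subst sum_choose_lower) simp
    finally show ?case .
  qed
  then show ?thesis using Suc by simp
qed

definition largest_part_gf :: "nat \<Rightarrow> nat \<Rightarrow> rat fps" where
  "largest_part_gf r a = fps_X ^ a * inverse (1 - fps_X) ^ card (non_multiples r a)"

definition truncated_gf :: "nat \<Rightarrow> nat \<Rightarrow> rat fps" where
  "truncated_gf r N = (\<Sum>a\<in>non_multiples r N. largest_part_gf r a)"

definition perimeter_gf :: "nat \<Rightarrow> rat fps" where
  "perimeter_gf r = Abs_fps (\<lambda>M. if M = 0 then 0 else of_nat (g r M))"

lemma fps_nth_largest_part_gf: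
  "fps_nth (largest_part_gf r a) j =
     (if j < a then 0 else of_nat ((card (non_multiples r a) + (j - a) - 1) choose (j - a)))"
  unfolding largest_part_gf_def by (simp add: fps_X_power_mult_nth fps_nth_inverse_one_minus_X_power)

lemma fps_nth_truncated_gf:
  assumes "j \<le> N"
  shows "fps_nth (truncated_gf r N) j = fps_nth (perimeter_gf r) j"
proof -
  let ?c = "\<lambda>a. of_nat ((card (non_multiples r a) + (j - a) - 1) choose (j - a)) :: rat"
  have "fps_nth (truncated_gf r N) j = (\<Sum>a\<in>non_multiples r N. fps_nth (largest_part_gf r a) j)"
    by (simp add: truncated_gf_def fps_sum_nth)
  also have "\<dots> = (\<Sum>a\<in>non_multiples r j. fps_nth (largest_part_gf r a) j)"
    using assms by (intro sum.mono_neutral_right finite_non_multiples)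
      (auto simp: non_multiples_def fps_nth_largest_part_gf)
  also have "\<dots> = sum ?c (non_multiples r j)"
    by (intro sum.cong) (auto simp: non_multiples_def fps_nth_largest_part_gf)
  also have "\<dots> = fps_nth (perimeter_gf r) j"
    by (simp add: perimeter_gf_def g_eq_sum_choose non_multiples_def)
  finally show ?thesis .
qed

lemma largest_part_gf_eq:
  assumes "r > 0"
  shows "largest_part_gf r a =
    (fps_X ^ r * inverse (1 - fps_X) ^ (r - 1)) ^ (a div r) * (fps_X * inverse (1 - fps_X)) ^ (a mod r)"
proof -
  have "largest_part_gf r a = fps_X ^ (r * (a div r) + a mod r) *
      inverse (1 - fps_X) ^ ((r - 1) * (a div r) + a mod r)"
    unfolding largest_part_gf_def card_non_multiples[OF assms] by (simp add: mult.commute)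
  then show ?thesis
    by (simp only: power_add power_mult power_mult_distrib mult_ac)
qed

lemma truncated_gf_closed_form:
  assumes "r > 0"
  defines "u \<equiv> fps_X ^ r * inverse (1 - fps_X) ^ (r - 1)"
    and "w \<equiv> fps_X * inverse (1 - fps_X)"
  shows "truncated_gf r N =
    (\<Sum>q<N div r. u ^ q) * (\<Sum>i=1..r-1. w ^ i) + u ^ (N div r) * (\<Sum>i=1..N mod r. w ^ i)"
proof (induction N)
  case 0
  then show ?case by (simp add: truncated_gf_def non_multiples_def)
next
  case (Suc N)
  have step: "truncated_gf r (Suc N) =
      truncated_gf r N + (if r dvd Suc N then 0 else largest_part_gf r (Suc N))"
    by (simp add: truncated_gf_def non_multiples_Suc finite_non_multiples,
        simp add: non_multiples_def)
  show ?case
  proof (cases "r dvd Suc N")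
    case True
    then have "Suc (N mod r) = r"
      using assms(1) by (metis mod_Suc dvd_eq_mod_eq_0 nat.distinct(1))
    then have "Suc N div r = Suc (N div r)" "Suc N mod r = 0" "N mod r = r - 1"
      using True by (simp_all add: div_Suc)
    then show ?thesis using step True Suc by (simp add: distrib_right)
  next
    case False
    then have "Suc (N mod r) \<noteq> r" by (metis mod_Suc dvd_eq_mod_eq_0)
    then have "Suc N div r = N div r" "Suc N mod r = Suc (N mod r)"
      by (simp_all add: div_Suc mod_Suc)
    then show ?thesis
      using step False Suc by (simp add: largest_part_gf_eq[OF assms(1)] u_def w_def algebra_simps)
  qed
qed

lemma perimeter_gf_geometric_relation:
  assumes "r > 0"
  defines "u \<equiv> fps_X ^ r * inverse (1 - fps_X) ^ (r - 1)"
    and "w \<equiv> fps_X * inverse (1 - fps_X)"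
  shows "perimeter_gf r * (1 - u) = (\<Sum>i=1..r-1. w ^ i)"
proof (rule fps_ext)
  fix M
  let ?S = "\<Sum>i=1..r-1. w ^ i"
  define Q where "Q = Suc M"
  have "Q * 1 \<le> Q * r"
    using assms(1) by (intro mult_le_mono2) simp
  then have "M < Q * r"
    unfolding Q_def by simp
  \<comment> \<open>up to degree \<open>M\<close> the series agrees with the finite sum over \<open>a \<le> Q r\<close>, and \<open>u\<^sup>Q\<close> has order \<open>Q r > M\<close>\<close>
  have "fps_nth (perimeter_gf r * (1 - u)) M = fps_nth (truncated_gf r (Q * r) * (1 - u)) M"
    using \<open>M < Q * r\<close> by (simp add: fps_mult_nth fps_nth_truncated_gf)
  also have "truncated_gf r (Q * r) = (\<Sum>q<Q. u ^ q) * ?S"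
    using truncated_gf_closed_form[OF assms(1), of "Q * r"] assms(1)
    unfolding u_def w_def by simp
  also have "(\<Sum>q<Q. u ^ q) * ?S * (1 - u) = (1 - u ^ Q) * ?S"
    unfolding one_diff_power_eq by (simp only: mult_ac)
  also have "\<dots> = ?S - u ^ Q * ?S"
    by (simp add: algebra_simps)
  also have "u ^ Q * ?S = fps_X ^ (r * Q) * (inverse (1 - fps_X) ^ ((r - 1) * Q) * ?S)"
    unfolding u_def by (simp add: power_mult_distrib mult_ac flip: power_mult)
  also have "fps_nth (?S - \<dots>) M = fps_nth ?S M"
    using \<open>M < Q * r\<close> by (simp add: fps_X_power_mult_nth mult.commute)
  finally show "fps_nth (perimeter_gf r * (1 - u)) M = fps_nth ?S M" .
qed

lemma geometric_relation_cleared: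
  fixes x v F :: "'a::comm_ring_1"
  assumes inv: "v * (1 - x) = 1" and "n \<ge> 1"
    and rel: "F * (1 - x ^ Suc n * v ^ n) = (\<Sum>i=1..n. (x * v) ^ i)"
  shows "F * ((1 - 2 * x) * ((1 - x) ^ n - x ^ Suc n)) = x * ((1 - x) ^ n - x ^ n)"
proof -
  let ?y = "x * v" and ?S = "\<Sum>i=1..n. (x * v) ^ i"
  have cancel: "?y ^ k * (1 - x) ^ k = x ^ k" for k
    using inv by (simp flip: power_mult_distrib add: mult.assoc)
  have "(1 - x ^ Suc n * v ^ n) * (1 - x) ^ n = (1 - x) ^ n - x * (?y ^ n * (1 - x) ^ n)"
    by (simp add: algebra_simps power_mult_distrib)
  then have clear: "(1 - x ^ Suc n * v ^ n) * (1 - x) ^ n = (1 - x) ^ n - x ^ Suc n"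
    by (simp add: cancel)
  have "(1 - x) * (1 - ?y) = 1 - x - x * (v * (1 - x))"
    by (simp add: algebra_simps)
  then have factor: "(1 - x) * (1 - ?y) = 1 - 2 * x"
    using inv by simp
  have geometric: "(1 - ?y) * ?S = ?y - ?y ^ Suc n"
    using sum_gp_multiplied[of 1 n ?y] \<open>n \<ge> 1\<close> by simp
  have "F * ((1 - 2 * x) * ((1 - x) ^ n - x ^ Suc n))
      = (F * (1 - x ^ Suc n * v ^ n)) * ((1 - x) * (1 - ?y)) * (1 - x) ^ n"
    by (simp only: factor flip: clear) (simp only: mult_ac)
  also have "\<dots> = ((1 - ?y) * ?S) * (1 - x) * (1 - x) ^ n"
    unfolding rel by (simp only: mult_ac)
  also have "\<dots> = ?y * (1 - x) * (1 - x) ^ n - ?y ^ Suc n * (1 - x) ^ Suc n"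
    by (simp only: geometric) (simp add: algebra_simps)
  also have "\<dots> = x * (1 - x) ^ n - x ^ Suc n"
    using cancel[of 1] by (simp only: cancel power_one_right)
  also have "\<dots> = x * ((1 - x) ^ n - x ^ n)"
    by (simp add: algebra_simps)
  finally show ?thesis .
qed

theorem mainTheorem13:
  fixes r :: nat
  assumes "r \<ge> 2"
  shows "(Abs_fps (\<lambda>M. if M = 0 then 0 else of_nat (g r M)) :: rat fps) =
    (fps_X / (1 - 2 * fps_X)) *
    (((1 - fps_X) ^ (r - 1) - fps_X ^ (r - 1)) / ((1 - fps_X) ^ (r - 1) - fps_X ^ r))"
proof -
  define n where "n = r - 1"
  have r: "r = Suc n" "n \<ge> 1"
    using assms unfolding n_def by auto
  let ?A = "1 - 2 * fps_X :: rat fps"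
  let ?E = "(1 - fps_X) ^ n - fps_X ^ Suc n :: rat fps"
  let ?N = "(1 - fps_X) ^ n - fps_X ^ n :: rat fps"
  have "inverse (1 - fps_X) * (1 - fps_X :: rat fps) = 1"
    by (simp add: inverse_mult_eq_1)
  moreover have "perimeter_gf r * (1 - fps_X ^ Suc n * inverse (1 - fps_X) ^ n) =
      (\<Sum>i=1..n. (fps_X * inverse (1 - fps_X)) ^ i)"
    using perimeter_gf_geometric_relation[of r] r by simp
  ultimately have key: "perimeter_gf r * (?A * ?E) = fps_X * ?N"
    by (rule geometric_relation_cleared[OF _ \<open>n \<ge> 1\<close>])
  have unit: "fps_nth (?A * ?E) 0 \<noteq> 0"
    by simp
  have "perimeter_gf r = perimeter_gf r * ((?A * ?E) * inverse (?A * ?E))"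
    using inverse_mult_eq_1'[OF unit] by simp
  also have "\<dots> = fps_X * ?N * inverse (?A * ?E)"
    by (subst mult.assoc[symmetric]) (simp only: key)
  also have "\<dots> = (fps_X / ?A) * (?N / ?E)"
    using unit by (simp add: fps_inverse_mult fps_divide_unit mult_ac)
  finally show ?thesis
    unfolding perimeter_gf_def n_def using r by simp
qed

end
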